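(* Let $\alpha>-1$ and let $\varphi$ be a holomorphic self-map of $\mathbb{D}$. Then the adjoint of the composition operator $C_\varphi:A^2_\alpha(\mathbb{D})\to A^2_\alpha(\mathbb{D})$ is itself a composition operator (i.e. $C_\varphi^*=C_\psi$ for some holomorphic self-map $\psi$ of $\mathbb{D}$) if and only if $\varphi(z)=\delta z$ for some $\delta\in\mathbb{C}$ with $|\delta|\le1$.
   Context: $\mathbb{D}$ is the open unit disc and $dA$ the normalized area measure on $\mathbb{D}$. For $\alpha>-1$, the weighted Bergman space $A^2_\alpha(\mathbb{D})$ consists of holomorphic $f$ on $\mathbb{D}$ with $\|f\|^2=\int_{\mathbb{D}}|f(z)|^2(1-|z|^2)^\alpha\,dA(z)<\infty$; it is a reproducing kernel Hilbert space with kernel $\kappa_w(z)=(1-\overline{w}z)^{-(\alpha+2)}$ (up to the normalization of the measure). $C_\varphi f=f\circ\varphi$. *)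

theory Defs
  imports "HOL-Analysis.Analysis" "HOL-Complex_Analysis.Complex_Analysis"
begin

text \<open>Weighted Bergman space A^2_alpha on the unit disc, with normalized area
measure dA = (1/pi) dx dy. Functions are total on the complex plane; only
their values on the disc matter.\<close>

definition bergman_weight :: "real \<Rightarrow> complex \<Rightarrow> real" where
  "bergman_weight \<alpha> z = (1 - (norm z)\<^sup>2) powr \<alpha> / pi"

definition A2 :: "real \<Rightarrow> (complex \<Rightarrow> complex) set" where
  "A2 \<alpha> = {f. f holomorphic_on ball 0 1 \<and>
     set_integrable lborel (ball 0 1) (\<lambda>z. (norm (f z))\<^sup>2 * bergman_weight \<alpha> z)}"

definition A2_inner :: "real \<Rightarrow> (complex \<Rightarrow> complex) \<Rightarrow> (complex \<Rightarrow> complex) \<Rightarrow> complex" where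
  "A2_inner \<alpha> f g = (LINT z : ball 0 1 | lborel. f z * cnj (g z) * complex_of_real (bergman_weight \<alpha> z))"

definition self_map_disc :: "(complex \<Rightarrow> complex) \<Rightarrow> bool" where
  "self_map_disc \<phi> \<longleftrightarrow> \<phi> holomorphic_on ball 0 1 \<and> \<phi> ` ball 0 1 \<subseteq> ball 0 1"

definition comp_adjoint :: "real \<Rightarrow> (complex \<Rightarrow> complex) \<Rightarrow> (complex \<Rightarrow> complex) \<Rightarrow> bool" where
  "comp_adjoint \<alpha> \<phi> \<psi> \<longleftrightarrow>
     (\<forall>f\<in>A2 \<alpha>. \<forall>g\<in>A2 \<alpha>. A2_inner \<alpha> (f \<circ> \<phi>) g = A2_inner \<alpha> f (g \<circ> \<psi>))"

end

theory Submission
  imports Defs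
begin

text \<open>
  If \<open>C\<^sub>\<phi>\<^sup>* = C\<^sub>\<psi>\<close>, test the adjoint identity on monomials. Rotations preserve the weighted
  area measure, so the monomials are orthogonal and \<open>\<langle>h, z\<^sup>m\<rangle> = h\<^sub>m \<parallel>z\<^sup>m\<parallel>\<^sup>2\<close>, where
  \<open>h\<^sub>m\<close> is the \<open>m\<close>-th Taylor coefficient. Thus \<open>\<langle>\<phi>\<^sup>n, z\<^sup>m\<rangle> = \<langle>z\<^sup>n, \<psi>\<^sup>m\<rangle>\<close> ties the coefficients
  of \<open>\<phi>\<^sup>n\<close> to those of \<open>\<psi>\<^sup>m\<close>: the pairs \<open>(0, 1)\<close> and \<open>(1, 0)\<close> give \<open>\<psi>(0) = \<phi>(0) = 0\<close>,
  and then \<open>(1, m)\<close> with \<open>m \<ge> 2\<close> kills the \<open>m\<close>-th coefficient of \<open>\<phi>\<close>, because \<open>\<psi>\<^sup>m\<close>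
  vanishes to order \<open>m\<close> at the origin. So \<open>\<phi>\<close> is linear, and \<open>|\<delta>| \<le> 1\<close> because \<open>\<phi>\<close> maps
  the disc into itself.

  Conversely, for \<open>\<phi>(z) = \<delta> z\<close> and \<open>\<psi>(z) = cnj \<delta> z\<close>, average both inner products over
  rotations (Lebesgue measure on \<open>\<complex>\<close> is rotation invariant, a rotation being a product of
  three shears). On each circle Parseval's identity turns both into
  \<open>\<Sum> a\<^sub>n \<delta>\<^sup>n cnj b\<^sub>n |z|\<^sup>2\<^sup>n\<close>. The same argument shows that \<open>f(\<delta> z)\<close> stays in \<open>A\<^sup>2\<^sub>\<alpha>\<close>: the means of
  \<open>|f|\<^sup>2\<close> over circles only decrease under dilation.
\<close>

section \<open>Rotation invariance of Lebesgue measure on \<open>\<complex>\<close>\<close>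

lemma borel_measurable_Complex_pair [measurable]:
  "(\<lambda>p :: real \<times> real. Complex (fst p) (snd p)) \<in> borel_measurable borel"
  by (intro borel_measurable_continuous_onI) (simp add: Complex_eq continuous_intros)

lemma lborel_complex_eq_distr_pair:
  "(lborel :: complex measure) = distr (lborel \<Otimes>\<^sub>M lborel) borel (\<lambda>(x, y). Complex x y)"
proof (rule lborel_eqI)
  fix l u :: complex
  assume le: "\<And>b. b \<in> Basis \<Longrightarrow> l \<bullet> b \<le> u \<bullet> b"
  then have "Re l \<le> Re u" "Im l \<le> Im u"
    using le[of 1] le[of \<i>] by (auto simp: Basis_complex_def)
  moreover have "(\<lambda>(x, y). Complex x y) -` box l u \<inter> space (lborel \<Otimes>\<^sub>M lborel)
      = {Re l<..<Re u} \<times> {Im l<..<Im u}"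
    by (auto simp: box_def Basis_complex_def space_pair_measure)
  moreover have "(\<lambda>(x, y). Complex x y) \<in> lborel \<Otimes>\<^sub>M lborel \<rightarrow>\<^sub>M (borel :: complex measure)"
    unfolding case_prod_beta' lborel_prod measurable_lborel1 by simp
  ultimately show "emeasure (distr (lborel \<Otimes>\<^sub>M lborel) borel (\<lambda>(x, y). Complex x y)) (box l u)
      = (\<Prod>b\<in>Basis. (u - l) \<bullet> b)"
    by (simp add: emeasure_distr lborel.emeasure_pair_measure_Times Basis_complex_def ennreal_mult)
qed simp

lemma borel_measurable_Complex [measurable (raw)]:
  fixes f g :: "'a \<Rightarrow> real"
  assumes "f \<in> borel_measurable M" "g \<in> borel_measurable M"
  shows "(\<lambda>x. Complex (f x) (g x)) \<in> borel_measurable M"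
  unfolding Complex_eq using assms by measurable

lemma nn_integral_lborel_complex_iterated:
  fixes F :: "complex \<Rightarrow> ennreal"
  assumes [measurable]: "F \<in> borel_measurable borel"
  shows "(\<integral>\<^sup>+ z. F z \<partial>lborel) = (\<integral>\<^sup>+ y. \<integral>\<^sup>+ x. F (Complex x y) \<partial>lborel \<partial>lborel)"
    and "(\<integral>\<^sup>+ z. F z \<partial>lborel) = (\<integral>\<^sup>+ x. \<integral>\<^sup>+ y. F (Complex x y) \<partial>lborel \<partial>lborel)"
proof -
  have m: "(\<lambda>p. F (Complex (fst p) (snd p))) \<in> borel_measurable (lborel \<Otimes>\<^sub>M lborel)"
    unfolding lborel_prod measurable_lborel1 by simp
  have "(\<integral>\<^sup>+ z. F z \<partial>lborel) = (\<integral>\<^sup>+ p. F (Complex (fst p) (snd p)) \<partial>(lborel \<Otimes>\<^sub>M lborel))"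
    by (subst lborel_complex_eq_distr_pair, subst nn_integral_distr)
       (auto simp: lborel_prod measurable_lborel1 case_prod_beta')
  then show "(\<integral>\<^sup>+ z. F z \<partial>lborel) = (\<integral>\<^sup>+ y. \<integral>\<^sup>+ x. F (Complex x y) \<partial>lborel \<partial>lborel)"
    and "(\<integral>\<^sup>+ z. F z \<partial>lborel) = (\<integral>\<^sup>+ x. \<integral>\<^sup>+ y. F (Complex x y) \<partial>lborel \<partial>lborel)"
    using lborel_pair.nn_integral_snd[OF m] lborel.nn_integral_fst[OF m] by simp_all
qed

definition shear_Re :: "real \<Rightarrow> complex \<Rightarrow> complex" where
  "shear_Re a z = Complex (Re z + a * Im z) (Im z)"

definition shear_Im :: "real \<Rightarrow> complex \<Rightarrow> complex" where
  "shear_Im b z = Complex (Re z) (Im z + b * Re z)"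

lemma borel_measurable_shear [measurable]:
  "shear_Re a \<in> borel_measurable borel" "shear_Im b \<in> borel_measurable borel"
  unfolding shear_Re_def shear_Im_def by measurable

lemma nn_integral_lborel_shear_Re:
  fixes F :: "complex \<Rightarrow> ennreal"
  assumes [measurable]: "F \<in> borel_measurable borel"
  shows "(\<integral>\<^sup>+ z. F (shear_Re a z) \<partial>lborel) = (\<integral>\<^sup>+ z. F z \<partial>lborel)"
proof -
  have "(\<integral>\<^sup>+ x. F (Complex (x + a * y) y) \<partial>lborel) = (\<integral>\<^sup>+ x. F (Complex x y) \<partial>lborel)" for y
    using nn_integral_real_affine[of "\<lambda>x. F (Complex x y)" 1 "a * y"] by (simp add: add.commute)
  then show ?thesis
    by (simp add: nn_integral_lborel_complex_iterated(1) shear_Re_def)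
qed

lemma nn_integral_lborel_shear_Im:
  fixes F :: "complex \<Rightarrow> ennreal"
  assumes [measurable]: "F \<in> borel_measurable borel"
  shows "(\<integral>\<^sup>+ z. F (shear_Im b z) \<partial>lborel) = (\<integral>\<^sup>+ z. F z \<partial>lborel)"
proof -
  have "(\<integral>\<^sup>+ y. F (Complex x (y + b * x)) \<partial>lborel) = (\<integral>\<^sup>+ y. F (Complex x y) \<partial>lborel)" for x
    using nn_integral_real_affine[of "\<lambda>y. F (Complex x y)" 1 "b * x"] by (simp add: add.commute)
  then show ?thesis
    by (simp add: nn_integral_lborel_complex_iterated(2) shear_Im_def)
qed

text \<open>The classical factorisation of the rotation by \<open>\<theta>\<close> into three shears, with
  \<open>a = - tan (\<theta>/2)\<close> and vertical shear parameter \<open>sin \<theta>\<close>.\<close>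

lemma rotation_eq_shears:
  assumes "norm u = 1" "u \<noteq> -1"
  defines "a \<equiv> - Im u / (1 + Re u)"
  shows "u * z = shear_Re a (shear_Im (Im u) (shear_Re a z))"
proof -
  have circle: "(Im u)\<^sup>2 = (1 - Re u) * (1 + Re u)"
    using assms(1) by (simp add: cmod_def algebra_simps power2_eq_square)
  have "1 + Re u \<noteq> 0"
    using assms(2) circle by (auto simp: complex_eq_iff)
  then have "a * (1 + Re u) = - Im u" "1 + a * Im u = Re u"
    using circle by (simp_all add: a_def field_simps power2_eq_square)
  then show ?thesis
    unfolding shear_Re_def shear_Im_def complex_eq_iff by simp algebra
qed

lemma nn_integral_lborel_rotate:
  fixes F :: "complex \<Rightarrow> ennreal"
  assumes [measurable]: "F \<in> borel_measurable borel" and "norm u = 1"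
  shows "(\<integral>\<^sup>+ z. F (u * z) \<partial>lborel) = (\<integral>\<^sup>+ z. F z \<partial>lborel)"
proof -
  have shears: "(\<integral>\<^sup>+ z. G (v * z) \<partial>lborel) = (\<integral>\<^sup>+ z. G z \<partial>lborel)"
    if [measurable]: "G \<in> borel_measurable borel" and v: "norm v = 1" "v \<noteq> -1" for G :: "complex \<Rightarrow> ennreal" and v
  proof -
    define a where "a = - Im v / (1 + Re v)"
    have "(\<integral>\<^sup>+ z. G (v * z) \<partial>lborel) = (\<integral>\<^sup>+ z. G (shear_Re a (shear_Im (Im v) (shear_Re a z))) \<partial>lborel)"
      unfolding a_def by (simp only: rotation_eq_shears[OF v])
    also have "\<dots> = (\<integral>\<^sup>+ z. G (shear_Re a (shear_Im (Im v) z)) \<partial>lborel)"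
      by (rule nn_integral_lborel_shear_Re) measurable
    also have "\<dots> = (\<integral>\<^sup>+ z. G (shear_Re a z) \<partial>lborel)"
      by (rule nn_integral_lborel_shear_Im) measurable
    also have "\<dots> = (\<integral>\<^sup>+ z. G z \<partial>lborel)"
      by (rule nn_integral_lborel_shear_Re) measurable
    finally show ?thesis .
  qed
  show ?thesis
  proof (cases "u = -1")
    case True
    \<comment> \<open>the shear decomposition degenerates at \<open>-1\<close>, which is the square of \<open>\<i>\<close>\<close>
    then have "(\<integral>\<^sup>+ z. F (u * z) \<partial>lborel) = (\<integral>\<^sup>+ z. F (\<i> * (\<i> * z)) \<partial>lborel)"
      by (simp add: mult.assoc[symmetric])
    also have "\<dots> = (\<integral>\<^sup>+ z. F z \<partial>lborel)"
      using shears[of "\<lambda>w. F (\<i> * w)" \<i>] shears[of F \<i>] by (simp add: complex_eq_iff)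
    finally show ?thesis .
  qed (use shears assms in auto)
qed

lemma lborel_distr_rotate:
  assumes "norm u = 1"
  shows "distr lborel borel (\<lambda>z. u * z) = (lborel :: complex measure)"
proof (rule measure_eqI)
  fix A :: "complex set"
  assume "A \<in> sets (distr lborel borel (\<lambda>z. u * z))"
  then have [measurable]: "A \<in> sets borel" by simp
  have "emeasure (distr lborel borel (\<lambda>z. u * z)) A = (\<integral>\<^sup>+ z. indicator A (u * z) \<partial>lborel)"
  proof -
    have "(\<lambda>z. u * z) -` A \<in> sets lborel"
      using measurable_sets_borel[of "\<lambda>z. u * z" _ A] by simp
    then show ?thesis
      by (simp add: emeasure_distr indicator_vimage[symmetric] nn_integral_indicator)
  qed
  also have "\<dots> = emeasure lborel A"
    by (simp add: nn_integral_lborel_rotate assms)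
  finally show "emeasure (distr lborel borel (\<lambda>z. u * z)) A = emeasure lborel A" .
qed simp

lemma integral_lborel_rotate:
  fixes f :: "complex \<Rightarrow> 'b::{banach, second_countable_topology}"
  assumes "norm u = 1" and "integrable lborel f"
  shows "(\<integral> z. f (u * z) \<partial>lborel) = integral\<^sup>L lborel f"
  using integral_distr[of "\<lambda>z. u * z" lborel borel f] lborel_distr_rotate[OF assms(1)]
    borel_measurable_integrable[OF assms(2)] by simp

lemma borel_measurable_rotate_pair [measurable]:
  "(\<lambda>p :: real \<times> complex. cis (2 * pi * fst p) * snd p) \<in> borel_measurable (lborel \<Otimes>\<^sub>M lborel)"
  unfolding lborel_prod measurable_lborel2
  by (intro borel_measurable_continuous_onI) (simp add: cis_conv_exp continuous_intros)

lemma nn_integral_lborel_circle_average: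
  fixes F :: "complex \<Rightarrow> ennreal"
  assumes [measurable]: "F \<in> borel_measurable borel"
  shows "(\<integral>\<^sup>+ z. F z \<partial>lborel)
    = (\<integral>\<^sup>+ z. \<integral>\<^sup>+ t. indicator {0..1} t * F (cis (2 * pi * t) * z) \<partial>lborel \<partial>lborel)"
proof -
  have "(\<lambda>p. indicator {0..1} (fst p) * F (cis (2 * pi * fst p) * snd p))
      \<in> borel_measurable (lborel \<Otimes>\<^sub>M (lborel :: complex measure))"
    by measurable
  from lborel_pair.Fubini[OF this]
  have "(\<integral>\<^sup>+ z. \<integral>\<^sup>+ t. indicator {0..1} t * F (cis (2 * pi * t) * z) \<partial>lborel \<partial>lborel)
      = (\<integral>\<^sup>+ t. \<integral>\<^sup>+ z. indicator {0..1} t * F (cis (2 * pi * t) * z) \<partial>lborel \<partial>lborel)"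
    by simp
  also have "\<dots> = (\<integral>\<^sup>+ t. indicator {0..1::real} t * (\<integral>\<^sup>+ z. F z \<partial>lborel) \<partial>lborel)"
    by (intro nn_integral_cong) (simp add: nn_integral_cmult nn_integral_lborel_rotate)
  finally show ?thesis
    by (simp add: nn_integral_multc)
qed

lemma integral_lborel_circle_average:
  fixes G :: "complex \<Rightarrow> complex"
  assumes G: "integrable lborel G"
  shows "integral\<^sup>L lborel G = (\<integral> z. (LINT t:{0..1}|lborel. G (cis (2 * pi * t) * z)) \<partial>lborel)"
proof -
  have [measurable]: "G \<in> borel_measurable borel"
    using borel_measurable_integrable[OF G] by simp
  define K where "K t z = indicator {0..1} t *\<^sub>R G (cis (2 * pi * t) * z)" for t z
  have [measurable]: "case_prod K \<in> borel_measurable (lborel \<Otimes>\<^sub>M lborel)"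
    unfolding K_def case_prod_beta' by measurable
  have "(\<lambda>p. ennreal (norm (case_prod K p))) \<in> borel_measurable (lborel \<Otimes>\<^sub>M lborel)"
    by measurable
  from lborel.nn_integral_fst[OF this, symmetric]
  have "(\<integral>\<^sup>+ p. norm (case_prod K p) \<partial>(lborel \<Otimes>\<^sub>M lborel))
      = (\<integral>\<^sup>+ t. \<integral>\<^sup>+ z. indicator {0..1} t * ennreal (norm (G (cis (2 * pi * t) * z))) \<partial>lborel \<partial>lborel)"
    by (simp add: K_def indicator_mult_ennreal mult.commute)
  also have "\<dots> = (\<integral>\<^sup>+ t. indicator {0..1::real} t * (\<integral>\<^sup>+ z. norm (G z) \<partial>lborel) \<partial>lborel)"
    using nn_integral_lborel_rotate[of "\<lambda>z. ennreal (norm (G z))"]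
    by (intro nn_integral_cong) (simp add: nn_integral_cmult measurable_compose[OF _ borel_measurable_norm])
  also have "\<dots> < \<infinity>"
    using G by (simp add: nn_integral_multc integrable_iff_bounded)
  finally have "integrable (lborel \<Otimes>\<^sub>M lborel) (case_prod K)"
    by (intro integrableI_bounded) simp_all
  then have "(\<integral> z. (\<integral> t. K t z \<partial>lborel) \<partial>lborel) = (\<integral> t. (\<integral> z. K t z \<partial>lborel) \<partial>lborel)"
    by (rule lborel_pair.Fubini_integral)
  also have "\<dots> = (\<integral> t. indicator {0..1::real} t *\<^sub>R integral\<^sup>L lborel G \<partial>lborel)"
    unfolding K_def by (simp add: integral_lborel_rotate G)
  finally show ?thesis
    by (simp add: K_def set_lebesgue_integral_def)
qed

section \<open>Means over circles\<close>

definition circle_mean :: "(complex \<Rightarrow> complex) \<Rightarrow> complex \<Rightarrow> complex" where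
  "circle_mean F z = (LINT t:{0..1}|lborel. F (cis (2 * pi * t) * z))"

lemma continuous_on_circle:
  fixes F :: "complex \<Rightarrow> complex"
  assumes "continuous_on (ball 0 1) F" and "z \<in> ball 0 1"
  shows "continuous_on UNIV (\<lambda>t. F (cis (2 * pi * t) * z))"
  by (rule continuous_on_compose2[OF assms(1)])
     (use assms(2) in \<open>auto simp: norm_mult cis_conv_exp intro!: continuous_intros\<close>)

lemma set_integrable_circle:
  fixes F :: "complex \<Rightarrow> complex"
  assumes "continuous_on (ball 0 1) F" and "z \<in> ball 0 1"
  shows "set_integrable lborel {0..1} (\<lambda>t. F (cis (2 * pi * t) * z))"
  using borel_integrable_compact[OF compact_Icc continuous_on_subset[OF continuous_on_circle[OF assms] subset_UNIV]]
  by (simp add: set_integrable_def)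

lemma circle_mean_cnj: "circle_mean (\<lambda>w. cnj (F w)) z = cnj (circle_mean F z)"
  unfolding circle_mean_def set_lebesgue_integral_def
  by (simp flip: Bochner_Integration.integral_cnj)

lemma set_integral_cis_int_multiple:
  fixes k :: int
  shows "(LINT t:{0..1}|lborel. cis (2 * pi * k * t)) = (if k = 0 then 1 else 0)"
proof (cases "k = 0")
  case False
  define c where "c = 2 * pi * k"
  have "c \<noteq> 0"
    using False by (simp add: c_def)
  have "((\<lambda>t. cis (c * t) / (\<i> * c)) has_vector_derivative cis (c * t)) (at t within {0..1})" for t
  proof -
    have "((\<lambda>t. cis (c * t)) has_vector_derivative c *\<^sub>R (\<i> * cis (c * t))) (at t within {0..1})"
      unfolding has_vector_derivative_def
      by (auto intro!: derivative_eq_intros simp: scaleR_scaleR mult.commute)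
    from has_vector_derivative_divide[OF this, of "\<i> * c"] show ?thesis
      using \<open>c \<noteq> 0\<close> by (simp add: scaleR_conv_of_real field_simps)
  qed
  moreover have "cis c = 1"
    by (simp add: c_def)
  ultimately have "((\<lambda>t. cis (c * t)) has_integral 0) {0..1}"
    using fundamental_theorem_of_calculus[of 0 1 "\<lambda>t. cis (c * t) / (\<i> * c)" "\<lambda>t. cis (c * t)"]
    by simp
  moreover have "set_integrable lborel {0..1} (\<lambda>t. cis (c * t))"
    unfolding set_integrable_def
    by (intro borel_integrable_compact) (auto simp: cis_conv_exp intro!: continuous_intros)
  ultimately show ?thesis
    using False by (simp add: set_borel_integral_eq_integral(2) integral_unique c_def mult.assoc)
qed (simp add: set_lebesgue_integral_def)

lemma circle_mean_monomial:
  "circle_mean (\<lambda>w. w ^ k * cnj w ^ m) z = (if k = m then of_real (norm z ^ (2 * k)) else 0)"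
proof -
  have cis: "cis (2 * pi * t) ^ k * cnj (cis (2 * pi * t)) ^ m = cis (2 * pi * of_int (int k - int m) * t)"
    for t
    unfolding cis_cnj Complex.DeMoivre cis_mult by (simp add: algebra_simps)
  have "(cis (2 * pi * t) * z) ^ k * cnj (cis (2 * pi * t) * z) ^ m
      = z ^ k * cnj z ^ m * cis (2 * pi * of_int (int k - int m) * t)" for t
    by (subst cis[symmetric]) (simp add: power_mult_distrib mult_ac)
  then have "circle_mean (\<lambda>w. w ^ k * cnj w ^ m) z
      = z ^ k * cnj z ^ m * (LINT t:{0..1}|lborel. cis (2 * pi * of_int (int k - int m) * t))"
    by (simp add: circle_mean_def)
  also have "\<dots> = z ^ k * cnj z ^ m * (if k = m then 1 else 0)"
    using set_integral_cis_int_multiple[of "int k - int m"] by simp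
  finally show ?thesis
    by (simp add: power_mult_distrib[symmetric] power_mult flip: complex_norm_square)
qed

lemma circle_mean_power_series:
  fixes a :: "nat \<Rightarrow> complex"
  assumes sums: "\<And>w. w \<in> ball 0 1 \<Longrightarrow> (\<lambda>n. a n * w ^ n) sums F w"
    and \<Phi>: "continuous_on (ball 0 1) \<Phi>" and z: "z \<in> ball 0 1"
  shows "(\<lambda>n. a n * circle_mean (\<lambda>w. w ^ n * \<Phi> w) z) sums circle_mean (\<lambda>w. F w * \<Phi> w) z"
proof -
  define f where "f n t = indicator {0..1} t *\<^sub>R (a n * (cis (2 * pi * t) * z) ^ n * \<Phi> (cis (2 * pi * t) * z))"
    for n t
  have norm_f: "norm (f n t) = norm (a n * z ^ n) * (indicator {0..1} t * norm (\<Phi> (cis (2 * pi * t) * z)))"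
    for n t
    by (simp add: f_def norm_mult norm_power indicator_def)
  have summable: "summable (\<lambda>n. norm (a n * z ^ n))"
  proof (rule powser_insidea)
    define r where "r = (1 + norm z) / 2"
    have "norm z < r" "r < 1" "0 < r"
      using z by (simp_all add: r_def add_pos_nonneg)
    moreover have "norm (of_real r :: complex) = r"
      using \<open>0 < r\<close> by simp
    ultimately show "summable (\<lambda>n. a n * of_real r ^ n)" "norm z < norm (of_real r :: complex)"
      by (auto intro: sums_summable[OF sums])
  qed
  have "integrable lborel (f n)" for n
  proof -
    have "continuous_on (ball 0 1) (\<lambda>w. a n * w ^ n * \<Phi> w)"
      by (intro continuous_intros \<Phi>)
    from set_integrable_circle[OF this z] show ?thesis
      by (simp add: f_def[abs_def] set_integrable_def)
  qed
  moreover have "AE t in lborel. summable (\<lambda>n. norm (f n t))"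
    by (simp add: norm_f summable_mult2 summable)
  moreover have "summable (\<lambda>n. \<integral>t. norm (f n t) \<partial>lborel)"
    by (simp add: norm_f summable_mult2 summable)
  ultimately have "(\<lambda>n. integral\<^sup>L lborel (f n)) sums (\<integral> t. (\<Sum>n. f n t) \<partial>lborel)"
    by (rule sums_integral)
  moreover have "integral\<^sup>L lborel (f n) = a n * circle_mean (\<lambda>w. w ^ n * \<Phi> w) z" for n
  proof -
    have "f n = (\<lambda>t. a n * (indicator {0..1} t *\<^sub>R ((cis (2 * pi * t) * z) ^ n * \<Phi> (cis (2 * pi * t) * z))))"
      by (auto simp: f_def fun_eq_iff indicator_def)
    then show ?thesis
      by (simp only: circle_mean_def set_lebesgue_integral_def integral_mult_right_zero)
  qed
  moreover have "(\<Sum>n. f n t) = indicator {0..1} t *\<^sub>R (F (cis (2 * pi * t) * z) * \<Phi> (cis (2 * pi * t) * z))" for t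
    using sums_mult2[OF sums, of "cis (2 * pi * t) * z" "\<Phi> (cis (2 * pi * t) * z)"] z
    by (simp add: f_def sums_iff norm_mult indicator_def)
  ultimately show ?thesis
    by (simp add: circle_mean_def set_lebesgue_integral_def)
qed

lemma circle_mean_coeff:
  fixes a :: "nat \<Rightarrow> complex"
  assumes sums: "\<And>w. w \<in> ball 0 1 \<Longrightarrow> (\<lambda>n. a n * w ^ n) sums F w" and z: "z \<in> ball 0 1"
  shows "circle_mean (\<lambda>w. F w * cnj w ^ m) z = a m * of_real (norm z ^ (2 * m))"
proof -
  have "continuous_on (ball 0 1) (\<lambda>w. cnj w ^ m)"
    by (intro continuous_intros)
  from circle_mean_power_series[OF sums this z]
  have "(\<lambda>n. a n * circle_mean (\<lambda>w. w ^ n * cnj w ^ m) z) sums circle_mean (\<lambda>w. F w * cnj w ^ m) z" .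
  moreover have "(\<lambda>n. a n * circle_mean (\<lambda>w. w ^ n * cnj w ^ m) z)
      = (\<lambda>n. if n = m then a m * of_real (norm z ^ (2 * m)) else 0)"
    by (auto simp: circle_mean_monomial)
  ultimately have "(\<lambda>n. if n = m then a m * of_real (norm z ^ (2 * m)) else 0)
      sums circle_mean (\<lambda>w. F w * cnj w ^ m) z"
    by simp
  from sums_unique2[OF this sums_single[of m "\<lambda>_. a m * of_real (norm z ^ (2 * m))"]]
  show ?thesis by simp
qed

lemma circle_mean_power_series_inner:
  fixes a b :: "nat \<Rightarrow> complex"
  assumes sums_F: "\<And>w. w \<in> ball 0 1 \<Longrightarrow> (\<lambda>n. a n * w ^ n) sums F w"
    and sums_G: "\<And>w. w \<in> ball 0 1 \<Longrightarrow> (\<lambda>n. b n * w ^ n) sums G w"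
    and G: "continuous_on (ball 0 1) G" and z: "z \<in> ball 0 1"
  shows "(\<lambda>n. a n * cnj (b n) * of_real (norm z ^ (2 * n))) sums circle_mean (\<lambda>w. F w * cnj (G w)) z"
proof -
  have "circle_mean (\<lambda>w. w ^ n * cnj (G w)) z = cnj (circle_mean (\<lambda>w. G w * cnj w ^ n) z)" for n
    by (simp add: mult.commute flip: circle_mean_cnj)
  then have "circle_mean (\<lambda>w. w ^ n * cnj (G w)) z = cnj (b n) * of_real (norm z ^ (2 * n))" for n
    by (simp only: circle_mean_coeff[OF sums_G z] complex_cnj_mult complex_cnj_complex_of_real)
  moreover have "continuous_on (ball 0 1) (\<lambda>w. cnj (G w))"
    by (intro continuous_intros G)
  ultimately show ?thesis
    using circle_mean_power_series[OF sums_F _ z, of "\<lambda>w. cnj (G w)"] by (simp add: mult.assoc)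
qed

lemma nn_integral_circle_norm_sq:
  fixes a :: "nat \<Rightarrow> complex"
  assumes sums: "\<And>w. w \<in> ball 0 1 \<Longrightarrow> (\<lambda>n. a n * w ^ n) sums F w"
    and F: "continuous_on (ball 0 1) F" and z: "z \<in> ball 0 1"
  shows "summable (\<lambda>n. (norm (a n))\<^sup>2 * norm z ^ (2 * n))"
    and "(\<integral>\<^sup>+ t. indicator {0..1} t * ennreal ((norm (F (cis (2 * pi * t) * z)))\<^sup>2) \<partial>lborel)
      = ennreal (\<Sum>n. (norm (a n))\<^sup>2 * norm z ^ (2 * n))"
proof -
  have "circle_mean (\<lambda>w. F w * cnj (F w)) z
      = of_real (LINT t:{0..1}|lborel. (norm (F (cis (2 * pi * t) * z)))\<^sup>2)"
    by (simp only: circle_mean_def complex_norm_square[symmetric] set_integral_complex_of_real)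
  moreover from circle_mean_power_series_inner[OF sums sums F z]
  have "(\<lambda>n. of_real ((norm (a n))\<^sup>2 * norm z ^ (2 * n))) sums circle_mean (\<lambda>w. F w * cnj (F w)) z"
    by (simp only: complex_norm_square[symmetric] of_real_mult)
  ultimately have sums_norm: "(\<lambda>n. (norm (a n))\<^sup>2 * norm z ^ (2 * n))
      sums (LINT t:{0..1}|lborel. (norm (F (cis (2 * pi * t) * z)))\<^sup>2)"
    by (simp only: sums_of_real_iff)
  then show "summable (\<lambda>n. (norm (a n))\<^sup>2 * norm z ^ (2 * n))"
    by (rule sums_summable)
  have "continuous_on UNIV (\<lambda>t. (norm (F (cis (2 * pi * t) * z)))\<^sup>2)"
    using continuous_on_circle[OF F z] by (intro continuous_intros)
  then have "integrable lborel (\<lambda>t. indicator {0..1::real} t *\<^sub>R (norm (F (cis (2 * pi * t) * z)))\<^sup>2)"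
    by (intro borel_integrable_compact) (auto intro: continuous_on_subset)
  then have "integrable lborel (\<lambda>t. indicator {0..1} t * (norm (F (cis (2 * pi * t) * z)))\<^sup>2)"
    by simp
  then show "(\<integral>\<^sup>+ t. indicator {0..1} t * ennreal ((norm (F (cis (2 * pi * t) * z)))\<^sup>2) \<partial>lborel)
      = ennreal (\<Sum>n. (norm (a n))\<^sup>2 * norm z ^ (2 * n))"
    using sums_norm
    by (simp add: nn_integral_eq_integral indicator_mult_ennreal set_lebesgue_integral_def sums_iff)
qed

section \<open>Radial integrals over the unit disc\<close>

lemma sets_borel_ball [measurable]: "ball (x :: 'a :: metric_space) r \<in> sets borel"
  by simp

lemma emeasure_lborel_ball_complex: "r \<ge> 0 \<Longrightarrow> emeasure lborel (ball (0::complex) r) = ennreal (pi * r\<^sup>2)"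
  using emeasure_ball[of r "0::complex"] by (simp add: unit_ball_vol_2)

lemma emeasure_lborel_cball_complex: "r \<ge> 0 \<Longrightarrow> emeasure lborel (cball (0::complex) r) = ennreal (pi * r\<^sup>2)"
  using emeasure_cball[of r "0::complex"] by (simp add: unit_ball_vol_2)

lemma emeasure_disc_norm_sq_greater:
  "emeasure lborel (ball (0::complex) 1 \<inter> {z. x < (norm z)\<^sup>2})
    = ennreal pi * emeasure lborel ({0..1::real} \<inter> {x<..})"
proof (cases "x < 0")
  case True
  then have "ball (0::complex) 1 \<inter> {z. x < (norm z)\<^sup>2} = ball 0 1" "{0..1::real} \<inter> {x<..} = {0..1}"
    using order.strict_trans2[OF True zero_le_power2] by auto
  then show ?thesis
    by (simp add: emeasure_lborel_ball_complex)
next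
  case False
  show ?thesis
  proof (cases "x < 1")
    case True
    have "x < (norm z)\<^sup>2 \<longleftrightarrow> sqrt x < norm z" for z :: complex
      using real_sqrt_less_iff[of x "(norm z)\<^sup>2"] by simp
    then have annulus: "ball (0::complex) 1 \<inter> {z. x < (norm z)\<^sup>2} = ball 0 1 - cball 0 (sqrt x)"
      by (intro set_eqI) (simp add: dist_norm not_le)
    have sqrt_less_1: "sqrt x < 1"
      using True by simp
    have "cball (0::complex) (sqrt x) \<subseteq> ball 0 1"
      by (auto simp: dist_norm intro: le_less_trans[OF _ sqrt_less_1])
    then have "emeasure lborel (ball 0 1 - cball (0::complex) (sqrt x))
        = emeasure lborel (ball (0::complex) 1) - emeasure lborel (cball (0::complex) (sqrt x))"
      by (intro emeasure_Diff) (use emeasure_lborel_cball_finite[of "0::complex" "sqrt x"] in auto)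
    then have "emeasure lborel (ball (0::complex) 1 \<inter> {z. x < (norm z)\<^sup>2}) = ennreal (pi * (1 - x))"
      using True False
      by (simp add: annulus emeasure_lborel_ball_complex emeasure_lborel_cball_complex ennreal_minus[symmetric]
          algebra_simps)
    moreover have "{0..1} \<inter> {x<..} = {x<..1::real}"
      using False by auto
    ultimately show ?thesis
      using True False by (simp add: ennreal_mult')
  next
    case False
    then have "(norm z)\<^sup>2 \<le> x" if "norm z < 1" for z :: complex
      using that power_le_one[of "norm z" 2] by simp
    then have "ball (0::complex) 1 \<inter> {z. x < (norm z)\<^sup>2} = {}" "{0..1::real} \<inter> {x<..} = {}"
      using False by (fastforce simp: not_less)+
    then show ?thesis
      by simp
  qed
qed

lemma distr_disc_norm_sq:
  "distr (density lborel (indicator (ball (0::complex) 1))) borel (\<lambda>z. (norm z)\<^sup>2)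
     = density lborel (\<lambda>s::real. ennreal pi * indicator {0..1} s)"
proof (rule measure_eqI_lessThan)
  fix x :: real
  have distr_eq: "emeasure (distr (density lborel (indicator (ball (0::complex) 1))) borel (\<lambda>z. (norm z)\<^sup>2)) {x<..}
      = emeasure lborel (ball (0::complex) 1 \<inter> {z. x < (norm z)\<^sup>2})"
    by (subst emeasure_distr, measurable, subst emeasure_density)
       (auto intro!: nn_integral_cong simp: vimage_def split: split_indicator
         simp flip: nn_integral_indicator)
  moreover have density_eq: "emeasure (density lborel (\<lambda>s::real. ennreal pi * indicator {0..1} s)) {x<..}
      = ennreal pi * emeasure lborel ({0..1::real} \<inter> {x<..})"
    by (subst emeasure_density) (auto simp flip: nn_integral_cmult_indicator
        intro!: nn_integral_cong split: split_indicator)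
  ultimately show "emeasure (distr (density lborel (indicator (ball (0::complex) 1))) borel (\<lambda>z. (norm z)\<^sup>2)) {x<..}
      = emeasure (density lborel (\<lambda>s::real. ennreal pi * indicator {0..1} s)) {x<..}"
    by (simp add: emeasure_disc_norm_sq_greater)
  have "emeasure lborel ({0..1::real} \<inter> {x<..}) \<le> emeasure lborel {0..1::real}"
    by (rule emeasure_mono) auto
  then show "emeasure (distr (density lborel (indicator (ball (0::complex) 1))) borel (\<lambda>z. (norm z)\<^sup>2)) {x<..} < \<infinity>"
    unfolding distr_eq emeasure_disc_norm_sq_greater by (simp add: ennreal_mult_less_top order.strict_trans1)
qed simp_all

lemma nn_integral_disc_radial:
  fixes F :: "real \<Rightarrow> ennreal"
  assumes [measurable]: "F \<in> borel_measurable borel"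
  shows "(\<integral>\<^sup>+ z. indicator (ball (0::complex) 1) z * F ((norm z)\<^sup>2) \<partial>lborel)
       = ennreal pi * (\<integral>\<^sup>+ s. indicator {0..1} s * F s \<partial>lborel)"
proof -
  have "(\<integral>\<^sup>+ z. indicator (ball (0::complex) 1) z * F ((norm z)\<^sup>2) \<partial>lborel)
      = (\<integral>\<^sup>+ s. F s \<partial>distr (density lborel (indicator (ball (0::complex) 1))) borel (\<lambda>z. (norm z)\<^sup>2))"
    by (simp add: nn_integral_distr nn_integral_density)
  also have "\<dots> = ennreal pi * (\<integral>\<^sup>+ s. indicator {0..1} s * F s \<partial>lborel)"
    by (simp add: distr_disc_norm_sq nn_integral_density nn_integral_cmult mult.assoc)
  finally show ?thesis .
qed

lemma bergman_weight_nonneg: "bergman_weight \<alpha> z \<ge> 0"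
  by (simp add: bergman_weight_def)

lemma bergman_weight_rotate [simp]:
  "bergman_weight \<alpha> (cis t * z) = bergman_weight \<alpha> z" "bergman_weight \<alpha> (z * cis t) = bergman_weight \<alpha> z"
  by (simp_all add: bergman_weight_def norm_mult)

lemma borel_measurable_bergman_weight [measurable]: "bergman_weight \<alpha> \<in> borel_measurable borel"
  unfolding bergman_weight_def by measurable

definition bergman_moment :: "real \<Rightarrow> nat \<Rightarrow> real" where
  "bergman_moment \<alpha> m = (LINT z:ball 0 1|lborel. norm z ^ (2 * m) * bergman_weight \<alpha> z)"

lemma nn_integral_bergman_moment:
  "(\<integral>\<^sup>+ z. indicator (ball (0::complex) 1) z * ennreal (norm z ^ (2 * m) * bergman_weight \<alpha> z) \<partial>lborel)
   = (\<integral>\<^sup>+ s. indicator {0..1} s * ennreal (s ^ m * (1 - s) powr \<alpha>) \<partial>lborel)"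
proof -
  have "(\<integral>\<^sup>+ z. indicator (ball (0::complex) 1) z * ennreal (norm z ^ (2 * m) * bergman_weight \<alpha> z) \<partial>lborel)
      = ennreal pi * (\<integral>\<^sup>+ s. indicator {0..1} s * ennreal (s ^ m * (1 - s) powr \<alpha> / pi) \<partial>lborel)"
    by (subst nn_integral_disc_radial[symmetric])
       (simp_all add: bergman_weight_def power_mult)
  also have "\<dots> = (\<integral>\<^sup>+ s. indicator {0..1} s * ennreal (s ^ m * (1 - s) powr \<alpha>) \<partial>lborel)"
    by (subst nn_integral_cmult[symmetric])
       (auto intro!: nn_integral_cong simp: ennreal_mult'[symmetric] split: split_indicator)
  finally show ?thesis .
qed

lemma nn_integral_beta_finite:
  assumes "\<alpha> > -1"
  shows "(\<integral>\<^sup>+ s. indicator {0..1} s * ennreal (s ^ m * (1 - s) powr \<alpha>) \<partial>lborel) < \<infinity>"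
proof -
  have "(\<integral>\<^sup>+ s. indicator {0..1} s * ennreal (s ^ m * (1 - s) powr \<alpha>) \<partial>lborel)
      \<le> (\<integral>\<^sup>+ s. indicator {0..1} s * ennreal ((1 - s) powr \<alpha>) \<partial>lborel)"
    by (intro nn_integral_mono)
       (auto simp: ennreal_leI mult_left_le_one_le power_le_one split: split_indicator)
  also have "\<dots> = (\<integral>\<^sup>+ s. indicator {0..1} s * ennreal (s powr \<alpha>) \<partial>lborel)"
    using nn_integral_real_affine[of "\<lambda>s. indicator {0..1} s * ennreal (s powr \<alpha>)" "-1" 1]
    by (auto intro!: nn_integral_cong split: split_indicator)
  also have "\<dots> = (\<integral>\<^sup>+ s. ennreal (indicator {0..1} s * s powr \<alpha>) \<partial>lborel)"
    by (intro nn_integral_cong) (simp add: indicator_mult_ennreal)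
  also have "\<dots> = ennreal (1 / (\<alpha> + 1))"
    using nn_integral_has_integral_lebesgue[OF _ has_integral_powr_from_0[OF assms, of 1]] by simp
  finally show ?thesis
    using order.strict_trans1 by fastforce
qed

lemma nn_integral_beta_pos:
  "(\<integral>\<^sup>+ s. indicator {0..1} s * ennreal (s ^ m * (1 - s) powr \<alpha>) \<partial>lborel) > 0"
proof (rule ccontr)
  assume "\<not> ?thesis"
  then have "AE s in lborel. indicator {0..1} s * ennreal (s ^ m * (1 - s) powr \<alpha>) = 0"
    by (simp add: nn_integral_0_iff_AE)
  then have "AE s in lborel. s \<notin> {0<..<1::real}"
    by (rule AE_mp) (auto intro!: AE_I2 simp: indicator_def)
  then have "emeasure lborel {0<..<1::real} = 0"
    by (subst (asm) AE_iff_measurable[of "{0<..<1}"]) auto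
  then show False
    by simp
qed

lemma set_integrable_bergman_moment:
  assumes "\<alpha> > -1"
  shows "set_integrable lborel (ball (0::complex) 1) (\<lambda>z. norm z ^ (2 * m) * bergman_weight \<alpha> z)"
  unfolding set_integrable_def
proof (rule integrableI_nonneg)
  have "(\<integral>\<^sup>+ z. ennreal (indicator (ball (0::complex) 1) z *\<^sub>R (norm z ^ (2 * m) * bergman_weight \<alpha> z)) \<partial>lborel)
      = (\<integral>\<^sup>+ s. indicator {0..1} s * ennreal (s ^ m * (1 - s) powr \<alpha>) \<partial>lborel)"
    by (subst nn_integral_bergman_moment[symmetric]) (simp add: indicator_mult_ennreal)
  then show "(\<integral>\<^sup>+ z. ennreal (indicator (ball (0::complex) 1) z *\<^sub>R (norm z ^ (2 * m) * bergman_weight \<alpha> z)) \<partial>lborel) < \<infinity>"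
    using nn_integral_beta_finite[OF assms] by simp
qed (auto simp: bergman_weight_nonneg)

lemma bergman_moment_pos:
  assumes "\<alpha> > -1"
  shows "bergman_moment \<alpha> m > 0"
proof -
  have "ennreal (bergman_moment \<alpha> m)
      = (\<integral>\<^sup>+ z. indicator (ball (0::complex) 1) z * ennreal (norm z ^ (2 * m) * bergman_weight \<alpha> z) \<partial>lborel)"
    using set_integrable_bergman_moment[OF assms, of m]
    by (simp add: bergman_moment_def set_lebesgue_integral_def set_integrable_def nn_integral_eq_integral
        bergman_weight_nonneg indicator_mult_ennreal flip: nn_integral_eq_integral)
  then have "ennreal (bergman_moment \<alpha> m) > 0"
    using nn_integral_beta_pos[of m \<alpha>] by (simp add: nn_integral_bergman_moment)
  then show ?thesis
    by simp
qed

section \<open>The weighted Bergman space\<close>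

definition taylor_coeff :: "(complex \<Rightarrow> complex) \<Rightarrow> nat \<Rightarrow> complex" where
  "taylor_coeff f n = (deriv ^^ n) f 0 / fact n"

lemma taylor_coeff_sums:
  assumes "f holomorphic_on ball 0 1" and "w \<in> ball 0 1"
  shows "(\<lambda>n. taylor_coeff f n * w ^ n) sums f w"
  using holomorphic_power_series[OF assms] by (simp add: taylor_coeff_def)

lemma mult_in_unit_ball:
  fixes \<delta> z :: complex
  assumes "norm \<delta> \<le> 1" and "z \<in> ball 0 1"
  shows "\<delta> * z \<in> ball 0 1"
  using assms by (simp add: norm_mult) (meson le_less_trans mult_left_le_one_le norm_ge_zero)

lemma holomorphic_on_dilate:
  assumes "f holomorphic_on ball 0 1" and "norm \<delta> \<le> 1"
  shows "(\<lambda>z. f (\<delta> * z)) holomorphic_on ball 0 1"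
proof -
  have "f holomorphic_on (\<lambda>z. \<delta> * z) ` ball 0 1"
    using holomorphic_on_subset[OF assms(1)] mult_in_unit_ball[OF assms(2)] by blast
  then show ?thesis
    using holomorphic_on_compose[of "\<lambda>z. \<delta> * z" "ball 0 1" f] by (simp add: o_def holomorphic_intros)
qed

lemma taylor_coeff_sums_dilate:
  assumes "f holomorphic_on ball 0 1" and "norm \<delta> \<le> 1" and "w \<in> ball 0 1"
  shows "(\<lambda>n. (taylor_coeff f n * \<delta> ^ n) * w ^ n) sums f (\<delta> * w)"
  using taylor_coeff_sums[OF assms(1) mult_in_unit_ball[OF assms(2,3)]]
  by (simp add: power_mult_distrib mult_ac)

lemma borel_measurable_A2_integrand:
  fixes F G :: "complex \<Rightarrow> complex"
  assumes "continuous_on (ball 0 1) F" and "continuous_on (ball 0 1) G"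
  shows "(\<lambda>z. indicator (ball 0 1) z *\<^sub>R (F z * cnj (G z) * of_real (bergman_weight \<alpha> z))) \<in> borel_measurable borel"
proof -
  have "continuous_on (ball 0 1) (\<lambda>z. F z * cnj (G z))"
    using assms by (intro continuous_intros)
  from borel_measurable_continuous_on_indicator[OF _ this]
  have "(\<lambda>z. (indicator (ball 0 1) z *\<^sub>R (F z * cnj (G z))) * of_real (bergman_weight \<alpha> z)) \<in> borel_measurable borel"
    by measurable
  then show ?thesis
    by (simp add: mult.assoc)
qed

lemma borel_measurable_A2_norm_sq:
  fixes F :: "complex \<Rightarrow> complex"
  assumes "continuous_on (ball 0 1) F"
  shows "(\<lambda>z. indicator (ball 0 1) z * ((norm (F z))\<^sup>2 * bergman_weight \<alpha> z)) \<in> borel_measurable borel"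
proof -
  have "(\<lambda>z. Re (indicator (ball 0 1) z *\<^sub>R (F z * cnj (F z) * of_real (bergman_weight \<alpha> z)))) \<in> borel_measurable borel"
    using borel_measurable_A2_integrand[OF assms assms] by measurable
  then show ?thesis
    by (simp flip: complex_norm_square)
qed

lemma A2_iff_nn_integral:
  "f \<in> A2 \<alpha> \<longleftrightarrow> f holomorphic_on ball 0 1 \<and>
    (\<integral>\<^sup>+ z. indicator (ball 0 1) z * ennreal ((norm (f z))\<^sup>2 * bergman_weight \<alpha> z) \<partial>lborel) < \<infinity>"
proof (cases "f holomorphic_on ball 0 1")
  case True
  have "(\<lambda>z. indicator (ball 0 1) z * ((norm (f z))\<^sup>2 * bergman_weight \<alpha> z)) \<in> borel_measurable borel"
    by (rule borel_measurable_A2_norm_sq[OF holomorphic_on_imp_continuous_on[OF True]])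
  moreover have "(\<lambda>z. ennreal (norm (indicator (ball 0 1) z *\<^sub>R ((norm (f z))\<^sup>2 * bergman_weight \<alpha> z))))
      = (\<lambda>z. indicator (ball 0 1) z * ennreal ((norm (f z))\<^sup>2 * bergman_weight \<alpha> z))"
    by (auto simp: fun_eq_iff indicator_def bergman_weight_nonneg)
  ultimately show ?thesis
    using True by (simp add: A2_def set_integrable_def integrable_iff_bounded)
qed (simp add: A2_def)

lemma bounded_holomorphic_in_A2:
  assumes "\<alpha> > -1" and h: "h holomorphic_on ball 0 1" and B: "\<And>z. z \<in> ball 0 1 \<Longrightarrow> norm (h z) \<le> B"
  shows "h \<in> A2 \<alpha>"
  unfolding A2_iff_nn_integral
proof (intro conjI h)
  have "(\<integral>\<^sup>+ z. indicator (ball 0 1) z * ennreal ((norm (h z))\<^sup>2 * bergman_weight \<alpha> z) \<partial>lborel)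
      \<le> (\<integral>\<^sup>+ z. ennreal (B\<^sup>2) * (indicator (ball (0::complex) 1) z * ennreal (bergman_weight \<alpha> z)) \<partial>lborel)"
    using B by (intro nn_integral_mono)
      (auto simp: ennreal_mult'[symmetric] bergman_weight_nonneg power_mono mult_right_mono split: split_indicator
        intro!: ennreal_leI)
  also have "\<dots> < \<infinity>"
    using nn_integral_beta_finite[OF assms(1), of 0] nn_integral_bergman_moment[of 0 \<alpha>]
    by (simp add: nn_integral_cmult ennreal_mult_less_top)
  finally show "(\<integral>\<^sup>+ z. indicator (ball 0 1) z * ennreal ((norm (h z))\<^sup>2 * bergman_weight \<alpha> z) \<partial>lborel) < \<infinity>" .
qed

lemma monomial_in_A2: "\<alpha> > -1 \<Longrightarrow> (\<lambda>z. z ^ n) \<in> A2 \<alpha>"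
  by (rule bounded_holomorphic_in_A2[where B = 1]) (auto simp: norm_power power_le_one holomorphic_intros)

lemma power_self_map_in_A2:
  assumes "\<alpha> > -1" and "self_map_disc \<phi>"
  shows "(\<lambda>z. \<phi> z ^ n) \<in> A2 \<alpha>"
proof (rule bounded_holomorphic_in_A2[where B = 1])
  show "(\<lambda>z. \<phi> z ^ n) holomorphic_on ball 0 1"
    using assms(2) by (auto simp: self_map_disc_def intro!: holomorphic_intros)
  show "norm (\<phi> z ^ n) \<le> 1" if "z \<in> ball 0 1" for z
  proof -
    have "\<phi> z \<in> ball 0 1"
      using assms(2) that unfolding self_map_disc_def by blast
    then have "norm (\<phi> z) < 1"
      by simp
    then show ?thesis
      by (simp add: norm_power power_le_one)
  qed
qed fact

lemma set_integrable_A2_inner: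
  assumes F: "F \<in> A2 \<alpha>" and G: "G \<in> A2 \<alpha>"
  shows "set_integrable lborel (ball 0 1) (\<lambda>z. F z * cnj (G z) * of_real (bergman_weight \<alpha> z))"
  unfolding set_integrable_def
proof (rule Bochner_Integration.integrable_bound)
  show "integrable lborel (\<lambda>z. indicator (ball 0 1) z *\<^sub>R ((norm (F z))\<^sup>2 * bergman_weight \<alpha> z)
                              + indicator (ball 0 1) z *\<^sub>R ((norm (G z))\<^sup>2 * bergman_weight \<alpha> z))"
    using F G unfolding A2_def set_integrable_def by (intro Bochner_Integration.integrable_add) auto
  show "(\<lambda>z. indicator (ball 0 1) z *\<^sub>R (F z * cnj (G z) * of_real (bergman_weight \<alpha> z))) \<in> borel_measurable lborel"
    using F G by (simp add: A2_def borel_measurable_A2_integrand holomorphic_on_imp_continuous_on)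
  have "norm (F z) * norm (G z) \<le> (norm (F z))\<^sup>2 + (norm (G z))\<^sup>2" for z
    using sum_squares_bound[of "norm (F z)" "norm (G z)"] mult_nonneg_nonneg[OF norm_ge_zero[of "F z"] norm_ge_zero[of "G z"]]
    by linarith
  then show "AE z in lborel. norm (indicator (ball 0 1) z *\<^sub>R (F z * cnj (G z) * of_real (bergman_weight \<alpha> z)))
        \<le> norm (indicator (ball 0 1) z *\<^sub>R ((norm (F z))\<^sup>2 * bergman_weight \<alpha> z)
                + indicator (ball 0 1) z *\<^sub>R ((norm (G z))\<^sup>2 * bergman_weight \<alpha> z))"
    by (intro AE_I2) (auto simp: norm_mult bergman_weight_nonneg distrib_right[symmetric]
        intro!: mult_right_mono split: split_indicator)
qed

lemma cnj_A2_inner: "cnj (A2_inner \<alpha> f g) = A2_inner \<alpha> g f"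
  unfolding A2_inner_def set_lebesgue_integral_def
  by (simp add: mult_ac flip: Bochner_Integration.integral_cnj)

lemma A2_inner_eq_circle_mean:
  assumes "set_integrable lborel (ball 0 1) (\<lambda>z. F z * cnj (G z) * of_real (bergman_weight \<alpha> z))"
  shows "A2_inner \<alpha> F G
    = (LINT z:ball 0 1|lborel. of_real (bergman_weight \<alpha> z) * circle_mean (\<lambda>w. F w * cnj (G w)) z)"
proof -
  have "A2_inner \<alpha> F G = (\<integral> z. (LINT t:{0..1}|lborel.
      indicator (ball 0 1) (cis (2 * pi * t) * z) *\<^sub>R (F (cis (2 * pi * t) * z) * cnj (G (cis (2 * pi * t) * z))
        * of_real (bergman_weight \<alpha> (cis (2 * pi * t) * z)))) \<partial>lborel)"
    using integral_lborel_circle_average assms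
    unfolding A2_inner_def set_lebesgue_integral_def set_integrable_def by blast
  also have "\<dots> = (LINT z:ball 0 1|lborel. of_real (bergman_weight \<alpha> z) * circle_mean (\<lambda>w. F w * cnj (G w)) z)"
  proof -
    have "(\<lambda>t. indicator (ball 0 1) (cis (2 * pi * t) * z) *\<^sub>R (F (cis (2 * pi * t) * z) * cnj (G (cis (2 * pi * t) * z))
        * of_real (bergman_weight \<alpha> (cis (2 * pi * t) * z))))
      = (\<lambda>t. of_real (indicator (ball 0 1) z * bergman_weight \<alpha> z)
        * (F (cis (2 * pi * t) * z) * cnj (G (cis (2 * pi * t) * z))))" for z
      by (auto simp: fun_eq_iff indicator_def norm_mult)
    then show ?thesis
      by (simp add: circle_mean_def set_lebesgue_integral_def[of _ "ball 0 1"] scaleR_conv_of_real mult_ac)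
  qed
  finally show ?thesis .
qed

lemma A2_inner_monomial:
  assumes "\<alpha> > -1" and h: "h \<in> A2 \<alpha>"
  shows "A2_inner \<alpha> h (\<lambda>z. z ^ m) = taylor_coeff h m * of_real (bergman_moment \<alpha> m)"
proof -
  have hol: "h holomorphic_on ball 0 1"
    using h by (simp add: A2_def)
  have "A2_inner \<alpha> h (\<lambda>z. z ^ m)
      = (LINT z:ball 0 1|lborel. of_real (bergman_weight \<alpha> z) * circle_mean (\<lambda>w. h w * cnj w ^ m) z)"
    using A2_inner_eq_circle_mean[OF set_integrable_A2_inner[OF h monomial_in_A2[OF assms(1)]]] by simp
  also have "\<dots> = (LINT z:ball 0 1|lborel. taylor_coeff h m * of_real (norm z ^ (2 * m) * bergman_weight \<alpha> z))"
  proof (rule set_lebesgue_integral_cong, simp, intro allI impI)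
    fix z :: complex
    assume "z \<in> ball 0 1"
    from circle_mean_coeff[OF taylor_coeff_sums[OF hol] this]
    show "of_real (bergman_weight \<alpha> z) * circle_mean (\<lambda>w. h w * cnj w ^ m) z
        = taylor_coeff h m * of_real (norm z ^ (2 * m) * bergman_weight \<alpha> z)"
      by simp
  qed
  also have "\<dots> = taylor_coeff h m * of_real (bergman_moment \<alpha> m)"
    by (simp only: bergman_moment_def set_integral_mult_right set_integral_complex_of_real)
  finally show ?thesis .
qed

lemma nn_integral_A2_circle_average:
  fixes F :: "complex \<Rightarrow> complex"
  assumes F: "continuous_on (ball 0 1) F"
  shows "(\<integral>\<^sup>+ z. indicator (ball 0 1) z * ennreal ((norm (F z))\<^sup>2 * bergman_weight \<alpha> z) \<partial>lborel)
       = (\<integral>\<^sup>+ z. indicator (ball 0 1) z * ennreal (bergman_weight \<alpha> z) *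
              (\<integral>\<^sup>+ t. indicator {0..1} t * ennreal ((norm (F (cis (2 * pi * t) * z)))\<^sup>2) \<partial>lborel) \<partial>lborel)"
proof -
  from borel_measurable_A2_norm_sq[OF F]
  have "(\<lambda>z. indicator (ball 0 1) z * ennreal ((norm (F z))\<^sup>2 * bergman_weight \<alpha> z)) \<in> borel_measurable borel"
    by (simp add: indicator_mult_ennreal)
  from nn_integral_lborel_circle_average[OF this]
  have "(\<integral>\<^sup>+ z. indicator (ball 0 1) z * ennreal ((norm (F z))\<^sup>2 * bergman_weight \<alpha> z) \<partial>lborel)
    = (\<integral>\<^sup>+ z. \<integral>\<^sup>+ t. indicator {0..1} t * (indicator (ball 0 1) (cis (2 * pi * t) * z)
        * ennreal ((norm (F (cis (2 * pi * t) * z)))\<^sup>2 * bergman_weight \<alpha> (cis (2 * pi * t) * z))) \<partial>lborel \<partial>lborel)" .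
  also have "\<dots> = (\<integral>\<^sup>+ z. indicator (ball 0 1) z * ennreal (bergman_weight \<alpha> z) *
              (\<integral>\<^sup>+ t. indicator {0..1} t * ennreal ((norm (F (cis (2 * pi * t) * z)))\<^sup>2) \<partial>lborel) \<partial>lborel)"
  proof (intro nn_integral_cong)
    fix z :: complex
    have "(\<integral>\<^sup>+ t. indicator {0..1} t * (indicator (ball 0 1) (cis (2 * pi * t) * z)
        * ennreal ((norm (F (cis (2 * pi * t) * z)))\<^sup>2 * bergman_weight \<alpha> (cis (2 * pi * t) * z))) \<partial>lborel)
      = (\<integral>\<^sup>+ t. indicator (ball 0 1) z * ennreal (bergman_weight \<alpha> z) *
          (indicator {0..1} t * ennreal ((norm (F (cis (2 * pi * t) * z)))\<^sup>2)) \<partial>lborel)"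
      by (intro nn_integral_cong) (simp add: indicator_def norm_mult ennreal_mult' bergman_weight_nonneg mult_ac)
    also have "\<dots> = indicator (ball 0 1) z * ennreal (bergman_weight \<alpha> z) *
          (\<integral>\<^sup>+ t. indicator {0..1} t * ennreal ((norm (F (cis (2 * pi * t) * z)))\<^sup>2) \<partial>lborel)"
    proof (cases "z \<in> ball 0 1")
      case True
      have "(\<lambda>t. F (cis (2 * pi * t) * z)) \<in> borel_measurable borel"
        by (rule borel_measurable_continuous_onI[OF continuous_on_circle[OF F True]])
      then show ?thesis
        by (intro nn_integral_cmult) measurable
    qed simp
    finally show "(\<integral>\<^sup>+ t. indicator {0..1} t * (indicator (ball 0 1) (cis (2 * pi * t) * z)
        * ennreal ((norm (F (cis (2 * pi * t) * z)))\<^sup>2 * bergman_weight \<alpha> (cis (2 * pi * t) * z))) \<partial>lborel)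
      = indicator (ball 0 1) z * ennreal (bergman_weight \<alpha> z) *
          (\<integral>\<^sup>+ t. indicator {0..1} t * ennreal ((norm (F (cis (2 * pi * t) * z)))\<^sup>2) \<partial>lborel)" .
  qed
  finally show ?thesis .
qed

lemma A2_dilate:
  assumes f: "f \<in> A2 \<alpha>" and \<delta>: "norm \<delta> \<le> 1"
  shows "(\<lambda>z. f (\<delta> * z)) \<in> A2 \<alpha>"
proof -
  have hol: "f holomorphic_on ball 0 1"
    using f by (simp add: A2_def)
  have hol_\<delta>: "(\<lambda>z. f (\<delta> * z)) holomorphic_on ball 0 1"
    by (rule holomorphic_on_dilate[OF hol \<delta>])
  \<comment> \<open>by Parseval, since \<open>|\<delta>\<^sup>n| \<le> 1\<close>\<close>
  have circle_le: "(\<integral>\<^sup>+ t. indicator {0..1} t * ennreal ((norm (f (\<delta> * (cis (2 * pi * t) * z))))\<^sup>2) \<partial>lborel)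
      \<le> (\<integral>\<^sup>+ t. indicator {0..1} t * ennreal ((norm (f (cis (2 * pi * t) * z)))\<^sup>2) \<partial>lborel)"
    if z: "z \<in> ball 0 1" for z
  proof -
    note dilated = nn_integral_circle_norm_sq[OF taylor_coeff_sums_dilate[OF hol \<delta>]
        holomorphic_on_imp_continuous_on[OF hol_\<delta>] z]
    note original = nn_integral_circle_norm_sq[OF taylor_coeff_sums[OF hol]
        holomorphic_on_imp_continuous_on[OF hol] z]
    have "(norm (taylor_coeff f n * \<delta> ^ n))\<^sup>2 * norm z ^ (2 * n) \<le> (norm (taylor_coeff f n))\<^sup>2 * norm z ^ (2 * n)"
      for n
    proof -
      have "(norm \<delta> ^ n)\<^sup>2 \<le> 1"
        using \<delta> by (simp add: power_le_one)
      then show ?thesis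
        by (intro mult_right_mono) (simp_all add: norm_mult norm_power power_mult_distrib mult_left_le)
    qed
    then have "(\<Sum>n. (norm (taylor_coeff f n * \<delta> ^ n))\<^sup>2 * norm z ^ (2 * n))
        \<le> (\<Sum>n. (norm (taylor_coeff f n))\<^sup>2 * norm z ^ (2 * n))"
      using dilated(1) original(1) by (intro suminf_le)
    then show ?thesis
      using dilated(2) original(2) by (simp add: ennreal_leI)
  qed
  have "(\<integral>\<^sup>+ z. indicator (ball 0 1) z * ennreal ((norm (f (\<delta> * z)))\<^sup>2 * bergman_weight \<alpha> z) \<partial>lborel)
      = (\<integral>\<^sup>+ z. indicator (ball 0 1) z * ennreal (bergman_weight \<alpha> z) *
          (\<integral>\<^sup>+ t. indicator {0..1} t * ennreal ((norm (f (\<delta> * (cis (2 * pi * t) * z))))\<^sup>2) \<partial>lborel) \<partial>lborel)"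
    by (rule nn_integral_A2_circle_average[OF holomorphic_on_imp_continuous_on[OF hol_\<delta>]])
  also have "\<dots> \<le> (\<integral>\<^sup>+ z. indicator (ball 0 1) z * ennreal (bergman_weight \<alpha> z) *
          (\<integral>\<^sup>+ t. indicator {0..1} t * ennreal ((norm (f (cis (2 * pi * t) * z)))\<^sup>2) \<partial>lborel) \<partial>lborel)"
    by (intro nn_integral_mono) (auto intro!: mult_left_mono circle_le split: split_indicator)
  also have "\<dots> = (\<integral>\<^sup>+ z. indicator (ball 0 1) z * ennreal ((norm (f z))\<^sup>2 * bergman_weight \<alpha> z) \<partial>lborel)"
    by (rule nn_integral_A2_circle_average[OF holomorphic_on_imp_continuous_on[OF hol], symmetric])
  also have "\<dots> < \<infinity>"
    using f by (simp add: A2_iff_nn_integral)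
  finally show ?thesis
    using hol_\<delta> by (simp add: A2_iff_nn_integral)
qed

lemma A2_inner_dilate:
  assumes f: "f \<in> A2 \<alpha>" and g: "g \<in> A2 \<alpha>" and \<delta>: "norm \<delta> \<le> 1"
  shows "A2_inner \<alpha> (\<lambda>z. f (\<delta> * z)) g = A2_inner \<alpha> f (\<lambda>z. g (cnj \<delta> * z))"
proof -
  have hol_f: "f holomorphic_on ball 0 1" and hol_g: "g holomorphic_on ball 0 1"
    using f g by (simp_all add: A2_def)
  have \<delta>': "norm (cnj \<delta>) \<le> 1"
    using \<delta> by simp
  have "A2_inner \<alpha> (\<lambda>z. f (\<delta> * z)) g
      = (LINT z:ball 0 1|lborel. of_real (bergman_weight \<alpha> z) * circle_mean (\<lambda>w. f (\<delta> * w) * cnj (g w)) z)"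
    by (rule A2_inner_eq_circle_mean[OF set_integrable_A2_inner[OF A2_dilate[OF f \<delta>] g]])
  also have "\<dots> = (LINT z:ball 0 1|lborel.
      of_real (bergman_weight \<alpha> z) * circle_mean (\<lambda>w. f w * cnj (g (cnj \<delta> * w))) z)"
  proof (rule set_lebesgue_integral_cong, simp, intro allI impI)
    fix z :: complex
    assume z: "z \<in> ball 0 1"
    have "(\<lambda>n. (taylor_coeff f n * \<delta> ^ n) * cnj (taylor_coeff g n) * of_real (norm z ^ (2 * n)))
        sums circle_mean (\<lambda>w. f (\<delta> * w) * cnj (g w)) z"
      by (rule circle_mean_power_series_inner[OF taylor_coeff_sums_dilate[OF hol_f \<delta>]
            taylor_coeff_sums[OF hol_g] holomorphic_on_imp_continuous_on[OF hol_g] z])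
    moreover have "(\<lambda>n. taylor_coeff f n * cnj (taylor_coeff g n * cnj \<delta> ^ n) * of_real (norm z ^ (2 * n)))
        sums circle_mean (\<lambda>w. f w * cnj (g (cnj \<delta> * w))) z"
      by (rule circle_mean_power_series_inner[OF taylor_coeff_sums[OF hol_f]
            taylor_coeff_sums_dilate[OF hol_g \<delta>']
            holomorphic_on_imp_continuous_on[OF holomorphic_on_dilate[OF hol_g \<delta>']] z])
    ultimately show "of_real (bergman_weight \<alpha> z) * circle_mean (\<lambda>w. f (\<delta> * w) * cnj (g w)) z
        = of_real (bergman_weight \<alpha> z) * circle_mean (\<lambda>w. f w * cnj (g (cnj \<delta> * w))) z"
      by (simp add: mult_ac sums_unique2)
  qed
  also have "\<dots> = A2_inner \<alpha> f (\<lambda>z. g (cnj \<delta> * z))"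
    by (rule A2_inner_eq_circle_mean[OF set_integrable_A2_inner[OF f A2_dilate[OF g \<delta>']], symmetric])
  finally show ?thesis .
qed

lemma deriv_power_at_zero_eq_0:
  assumes "\<psi> holomorphic_on ball 0 1" and "\<psi> 0 = 0" and "m \<ge> 2"
  shows "deriv (\<lambda>z. \<psi> z ^ m) 0 = 0"
proof -
  have "(\<psi> has_field_derivative deriv \<psi> 0) (at 0)"
    using assms(1) by (intro holomorphic_derivI[of _ "ball 0 1"]) auto
  from DERIV_power[OF this, of m] show ?thesis
    using assms(2,3) by (simp add: DERIV_imp_deriv)
qed

lemma comp_adjoint_monomials:
  assumes "\<alpha> > -1" and \<phi>: "self_map_disc \<phi>" and \<psi>: "self_map_disc \<psi>" and "comp_adjoint \<alpha> \<phi> \<psi>"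
  shows "taylor_coeff (\<lambda>z. \<phi> z ^ n) m * of_real (bergman_moment \<alpha> m)
    = cnj (taylor_coeff (\<lambda>z. \<psi> z ^ m) n * of_real (bergman_moment \<alpha> n))"
proof -
  have "A2_inner \<alpha> ((\<lambda>z. z ^ n) \<circ> \<phi>) (\<lambda>z. z ^ m) = A2_inner \<alpha> (\<lambda>z. z ^ n) ((\<lambda>z. z ^ m) \<circ> \<psi>)"
    using assms(4) monomial_in_A2[OF assms(1)] unfolding comp_adjoint_def by blast
  also have "\<dots> = cnj (A2_inner \<alpha> (\<lambda>z. \<psi> z ^ m) (\<lambda>z. z ^ n))"
    by (simp add: cnj_A2_inner o_def)
  finally show ?thesis
    by (simp add: o_def A2_inner_monomial[OF assms(1) power_self_map_in_A2[OF assms(1)]] \<phi> \<psi>)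
qed

lemma comp_adjoint_imp_linear:
  assumes "\<alpha> > -1" and \<phi>: "self_map_disc \<phi>" and \<psi>: "self_map_disc \<psi>" and "comp_adjoint \<alpha> \<phi> \<psi>"
    and z: "z \<in> ball 0 1"
  shows "\<phi> z = taylor_coeff \<phi> 1 * z"
proof -
  note monomials = comp_adjoint_monomials[OF assms(1-4)]
  have moment_nz: "of_real (bergman_moment \<alpha> k) \<noteq> (0 :: complex)" for k
    using bergman_moment_pos[OF assms(1), of k] by simp
  have hol_\<phi>: "\<phi> holomorphic_on ball 0 1" and hol_\<psi>: "\<psi> holomorphic_on ball 0 1"
    using \<phi> \<psi> by (simp_all add: self_map_disc_def)
  \<comment> \<open>pairing with the constant \<open>1\<close> and with \<open>z\<close> forces both maps to fix the origin\<close>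
  have "\<psi> 0 = 0"
    using monomials[of 0 1] moment_nz[of 0] by (simp add: taylor_coeff_def)
  have "\<phi> 0 = 0"
    using monomials[of 1 0] moment_nz[of 0] by (simp add: taylor_coeff_def)
  have coeff_0: "taylor_coeff \<phi> m = 0" if "m \<noteq> 1" for m
  proof (cases "m = 0")
    case False
    then have "taylor_coeff (\<lambda>z. \<psi> z ^ m) 1 = 0"
      using that deriv_power_at_zero_eq_0[OF hol_\<psi> \<open>\<psi> 0 = 0\<close>] by (simp add: taylor_coeff_def)
    then show ?thesis
      using monomials[of 1 m] moment_nz[of m] by simp
  qed (simp add: taylor_coeff_def \<open>\<phi> 0 = 0\<close>)
  have "(\<lambda>n. taylor_coeff \<phi> n * z ^ n) sums \<phi> z"
    by (rule taylor_coeff_sums[OF hol_\<phi> z])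
  moreover have "(\<lambda>n. taylor_coeff \<phi> n * z ^ n) = (\<lambda>n. if n = 1 then taylor_coeff \<phi> 1 * z else 0)"
    using coeff_0 by auto
  ultimately show ?thesis
    using sums_unique2 sums_single[of 1 "\<lambda>_. taylor_coeff \<phi> 1 * z"] by simp
qed

lemma linear_self_map_norm_le:
  fixes \<phi> :: "complex \<Rightarrow> complex" and \<delta> :: complex
  assumes "\<phi> ` ball 0 1 \<subseteq> ball 0 1" and "\<And>z. z \<in> ball 0 1 \<Longrightarrow> \<phi> z = \<delta> * z"
  shows "norm \<delta> \<le> 1"
proof (rule ccontr)
  assume "\<not> norm \<delta> \<le> 1"
  then have "1 / \<delta> \<in> ball 0 1" "\<delta> \<noteq> 0"
    by (auto simp: norm_divide divide_less_eq)
  then have "\<phi> (1 / \<delta>) \<in> ball 0 1" and "\<phi> (1 / \<delta>) = 1"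
    using assms by (blast, simp)
  then show False
    by simp
qed

lemma self_map_disc_mult:
  assumes "norm \<delta> \<le> 1"
  shows "self_map_disc (\<lambda>z. \<delta> * z)"
  unfolding self_map_disc_def
  by (intro conjI holomorphic_intros) (use mult_in_unit_ball[OF assms] in blast)

lemma comp_adjoint_dilation:
  assumes "norm \<delta> \<le> 1" and "\<And>z. z \<in> ball 0 1 \<Longrightarrow> \<phi> z = \<delta> * z"
  shows "comp_adjoint \<alpha> \<phi> (\<lambda>z. cnj \<delta> * z)"
  unfolding comp_adjoint_def
proof (intro ballI)
  fix f g assume "f \<in> A2 \<alpha>" "g \<in> A2 \<alpha>"
  have "A2_inner \<alpha> (f \<circ> \<phi>) g = A2_inner \<alpha> (\<lambda>z. f (\<delta> * z)) g"
    unfolding A2_inner_def by (rule set_lebesgue_integral_cong) (auto simp: assms(2))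
  also have "\<dots> = A2_inner \<alpha> f (g \<circ> (\<lambda>z. cnj \<delta> * z))"
    using A2_inner_dilate[OF \<open>f \<in> A2 \<alpha>\<close> \<open>g \<in> A2 \<alpha>\<close> assms(1)] by (simp add: o_def)
  finally show "A2_inner \<alpha> (f \<circ> \<phi>) g = A2_inner \<alpha> f (g \<circ> (\<lambda>z. cnj \<delta> * z))" .
qed

theorem theorem3p2:
  fixes \<alpha> :: real and \<phi> :: "complex \<Rightarrow> complex"
  assumes "\<alpha> > -1" and "self_map_disc \<phi>"
  shows "(\<exists>\<psi>. self_map_disc \<psi> \<and> comp_adjoint \<alpha> \<phi> \<psi>) \<longleftrightarrow>
         (\<exists>\<delta>::complex. norm \<delta> \<le> 1 \<and> (\<forall>z\<in>ball 0 1. \<phi> z = \<delta> * z))"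
proof
  assume "\<exists>\<psi>. self_map_disc \<psi> \<and> comp_adjoint \<alpha> \<phi> \<psi>"
  then obtain \<psi> where "self_map_disc \<psi>" "comp_adjoint \<alpha> \<phi> \<psi>"
    by blast
  then have linear: "\<phi> z = taylor_coeff \<phi> 1 * z" if "z \<in> ball 0 1" for z
    using comp_adjoint_imp_linear assms that by blast
  moreover have "norm (taylor_coeff \<phi> 1) \<le> 1"
    using assms(2) linear by (intro linear_self_map_norm_le) (auto simp: self_map_disc_def)
  ultimately show "\<exists>\<delta>::complex. norm \<delta> \<le> 1 \<and> (\<forall>z\<in>ball 0 1. \<phi> z = \<delta> * z)"
    by blast
next
  assume "\<exists>\<delta>::complex. norm \<delta> \<le> 1 \<and> (\<forall>z\<in>ball 0 1. \<phi> z = \<delta> * z)"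
  then obtain \<delta> :: complex where "norm \<delta> \<le> 1" "\<forall>z\<in>ball 0 1. \<phi> z = \<delta> * z"
    by blast
  then show "\<exists>\<psi>. self_map_disc \<psi> \<and> comp_adjoint \<alpha> \<phi> \<psi>"
    using self_map_disc_mult[of "cnj \<delta>"] comp_adjoint_dilation[of \<delta> \<phi> \<alpha>] by auto
qed

end
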